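(* Let $\mathbf{L}$ be a distributive lattice, $n\ge1$ an integer, $F$ an $n$-filter on $\mathbf{L}$ and $x,y\in\mathbf{L}$. Then \[ \langle F,x\rangle_n\cap\langle F,y\rangle_n=\langle F,x\vee y\rangle_n, \] where $\langle F,z\rangle_n$ denotes the $n$-filter generated by $F\cup\{z\}$.
   Context: For a set $X$, $Y\subseteq_n X$ means $Y$ is a non-empty subset of $X$ with $|Y|\le n$. An $n$-filter on a lattice is an upset $F$ such that for every non-empty finite $X\subseteq F$: if $\bigwedge Y\in F$ for every $Y\subseteq_n X$ then $\bigwedge X\in F$. The $n$-filter generated by a set is the smallest $n$-filter containing it. *)

theory Defs
  imports Main
begin

definition upset :: "'a::order set \<Rightarrow> bool" where
  "upset F \<longleftrightarrow> (\<forall>x y. x \<in> F \<longrightarrow> x \<le> y \<longrightarrow> y \<in> F)"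

definition n_filter :: "nat \<Rightarrow> 'a::lattice set \<Rightarrow> bool" where
  "n_filter n F \<longleftrightarrow> upset F \<and>
     (\<forall>X. finite X \<and> X \<noteq> {} \<and> X \<subseteq> F \<longrightarrow>
        (\<forall>Y. Y \<subseteq> X \<and> Y \<noteq> {} \<and> card Y \<le> n \<longrightarrow> Inf_fin Y \<in> F) \<longrightarrow> Inf_fin X \<in> F)"

definition n_filter_gen :: "nat \<Rightarrow> 'a::lattice set \<Rightarrow> 'a set" where
  "n_filter_gen n S = \<Inter>{G. n_filter n G \<and> S \<subseteq> G}"

end

theory Submission
  imports Defs
begin

text \<open>For an n-filter G and an element c, the preimage of G under \<open>sup c\<close> is again an
  n-filter, because \<open>sup c\<close> distributes over finite meets. Let G be the n-filter generated by
  F and \<open>x \<squnion> y\<close>, and let a lie in both generated filters on the left. The generators F and x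
  lie in the preimage of G under \<open>sup y\<close>, hence so does a; then F and y lie in the preimage of G
  under \<open>sup a\<close>, hence so does a, i.e. \<open>a = a \<squnion> a \<in> G\<close>. The reverse inclusion holds because
  each filter on the left is an upset containing \<open>x \<squnion> y\<close>.\<close>

lemma n_filter_upset: "n_filter n G \<Longrightarrow> upset G"
  unfolding n_filter_def by blast

lemma n_filter_gen_least: "n_filter n G \<Longrightarrow> S \<subseteq> G \<Longrightarrow> n_filter_gen n S \<subseteq> G"
  unfolding n_filter_gen_def by blast

lemma subset_n_filter_gen: "S \<subseteq> n_filter_gen n S"
  unfolding n_filter_gen_def by blast

lemma n_filter_n_filter_gen: "n_filter n (n_filter_gen n (S::'a::lattice set))"
  unfolding n_filter_def
proof (intro conjI allI impI)
  show "upset (n_filter_gen n S)"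
    unfolding n_filter_gen_def n_filter_def upset_def by blast
next
  fix X :: "'a set"
  assume X: "finite X \<and> X \<noteq> {} \<and> X \<subseteq> n_filter_gen n S"
    and small: "\<forall>Y. Y \<subseteq> X \<and> Y \<noteq> {} \<and> card Y \<le> n \<longrightarrow> Inf_fin Y \<in> n_filter_gen n S"
  show "Inf_fin X \<in> n_filter_gen n S"
    unfolding n_filter_gen_def
  proof
    fix G assume "G \<in> {G. n_filter n G \<and> S \<subseteq> G}"
    then have "n_filter n G" and "n_filter_gen n S \<subseteq> G"
      using n_filter_gen_least by auto
    with X small show "Inf_fin X \<in> G"
      unfolding n_filter_def by blast
  qed
qed

lemma n_filter_gen_upward: "x \<in> S \<Longrightarrow> x \<le> z \<Longrightarrow> z \<in> n_filter_gen n S"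
  using n_filter_upset[OF n_filter_n_filter_gen] subset_n_filter_gen unfolding upset_def by blast

lemma n_filter_gen_subset_iff: "n_filter_gen n S \<subseteq> n_filter_gen n T \<longleftrightarrow> S \<subseteq> n_filter_gen n T"
  using n_filter_gen_least[OF n_filter_n_filter_gen] subset_n_filter_gen by blast

lemma n_filter_sup_preimage:
  fixes c :: "'a::distrib_lattice"
  assumes G: "n_filter n G"
  shows "n_filter n {b. sup c b \<in> G}"
  unfolding n_filter_def
proof (intro conjI allI impI)
  show "upset {b. sup c b \<in> G}"
    using n_filter_upset[OF G] unfolding upset_def by (metis mem_Collect_eq sup.mono order_refl)
next
  fix X :: "'a set"
  assume X: "finite X \<and> X \<noteq> {} \<and> X \<subseteq> {b. sup c b \<in> G}"
    and small: "\<forall>Y. Y \<subseteq> X \<and> Y \<noteq> {} \<and> card Y \<le> n \<longrightarrow> Inf_fin Y \<in> {b. sup c b \<in> G}"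
  have sup_Inf_fin: "sup c (Inf_fin Y) = Inf_fin (sup c ` Y)" if "finite Y" "Y \<noteq> {}" for Y
    using Inf_fin.hom_commute[where h = "sup c", OF sup_inf_distrib1 that] .
  have "Inf_fin Y' \<in> G" if Y': "Y' \<subseteq> sup c ` X" "Y' \<noteq> {}" "card Y' \<le> n" for Y'
  proof -
    obtain U where U: "U \<subseteq> X" "inj_on (sup c) U" "Y' = sup c ` U"
      using Y'(1) by (meson subset_image_inj)
    have "finite U" "U \<noteq> {}" "card U \<le> n"
      using U X Y' finite_subset card_image by (blast, blast, metis)
    then have "sup c (Inf_fin U) \<in> G"
      using small U(1) by blast
    then show ?thesis
      using sup_Inf_fin \<open>finite U\<close> \<open>U \<noteq> {}\<close> U(3) by simp
  qed
  then have "Inf_fin (sup c ` X) \<in> G"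
    using G X unfolding n_filter_def by blast
  then show "Inf_fin X \<in> {b. sup c b \<in> G}"
    using sup_Inf_fin X by simp
qed

lemma sup_mem_of_mem_n_filter_gen_insert:
  fixes c :: "'a::distrib_lattice"
  assumes G: "n_filter n G" and "F \<subseteq> G" and "sup c x \<in> G"
    and a: "a \<in> n_filter_gen n (F \<union> {x})"
  shows "sup c a \<in> G"
proof -
  have "F \<union> {x} \<subseteq> {b. sup c b \<in> G}"
    using assms n_filter_upset[OF G] unfolding upset_def by auto
  with a show ?thesis
    using n_filter_gen_least[OF n_filter_sup_preimage[OF G]] by blast
qed

theorem mainTheorem9:
  fixes F :: "'a::distrib_lattice set" and n :: nat and x y :: 'a
  assumes "n \<ge> 1" and "n_filter n F"
  shows "n_filter_gen n (F \<union> {x}) \<inter> n_filter_gen n (F \<union> {y}) = n_filter_gen n (F \<union> {sup x y})"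
    (is "_ = ?G")
proof
  have G: "n_filter n ?G" and F: "F \<subseteq> ?G" and xy: "sup x y \<in> ?G"
    using n_filter_n_filter_gen subset_n_filter_gen by blast+
  show "n_filter_gen n (F \<union> {x}) \<inter> n_filter_gen n (F \<union> {y}) \<subseteq> ?G"
  proof
    fix a assume a: "a \<in> n_filter_gen n (F \<union> {x}) \<inter> n_filter_gen n (F \<union> {y})"
    have "sup y x \<in> ?G"
      using xy by (simp add: sup_commute)
    then have "sup y a \<in> ?G"
      using sup_mem_of_mem_n_filter_gen_insert[OF G F] a by blast
    then have "sup a y \<in> ?G"
      by (simp add: sup_commute)
    then have "sup a a \<in> ?G"
      using sup_mem_of_mem_n_filter_gen_insert[OF G F] a by blast
    then show "a \<in> ?G" by simp
  qed
next
  have "?G \<subseteq> n_filter_gen n (F \<union> {x})" "?G \<subseteq> n_filter_gen n (F \<union> {y})"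
    unfolding n_filter_gen_subset_iff
    using subset_n_filter_gen[of "F \<union> {x}" n] subset_n_filter_gen[of "F \<union> {y}" n]
      n_filter_gen_upward[of x "F \<union> {x}" "sup x y" n]
      n_filter_gen_upward[of y "F \<union> {y}" "sup x y" n] by auto
  then show "?G \<subseteq> n_filter_gen n (F \<union> {x}) \<inter> n_filter_gen n (F \<union> {y})"
    by blast
qed

end
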